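(* Let $C$ and $D$ be $R$-linear codes of length $n$, let $\eta$ be a bi-composition of $n$, and let $r,s$ be the compositions of $n$ given by \[ r_i=\sum_{\beta\in R}\eta_{\omega_i\beta},\qquad s_i=\sum_{\alpha\in R}\eta_{\alpha\omega_i}. \] Let $B^{C',D}_{r,s,\eta}$ be the number of pairs $(u,v)\in C'\times D$ with $\mathrm{comp}(u)=r$, $\mathrm{comp}(v)=s$ and $\eta(u,v)=\eta$. Then \[ \sum_{\sigma\in S_n}B^{C^\sigma,D}_{r,s,\eta}=A_r^C\,A_s^D\,\prod_{i=0}^{|R|-1}r_i!\;\prod_{i=0}^{|R|-1}\frac{s_i!}{\prod_{j=0}^{|R|-1}\eta_{\omega_j\omega_i}!}. \]
   Context: $R$ denotes $\mathbb F_q$ or $\mathbb Z_k$ ($k\ge 2$), with elements in a fixed order $0=\omega_0,\dots,\omega_{|R|-1}$. An $R$-linear code of length $n$ is an $\mathbb F_q$-subspace of $\mathbb F_q^n$, respectively an additive subgroup of $\mathbb Z_k^n$. For $u\in R^n$, $\mathrm{comp}(u)=(s_0(u),\dots,s_{|R|-1}(u))$, where $s_i(u)$ is the number of coordinates equal to $\omega_i$. $A_s^C=\#\{u\in C:\mathrm{comp}(u)=s\}$. For $u,v\in R^n$, $\eta(u,v)$ is the vector with components $\eta_{\alpha\beta}(u,v)=\#\{i:(u_i,v_i)=(\alpha,\beta)\}$ for $(\alpha,\beta)\in R^2$. A bi-composition of $n$ is a family of non-negative integers $\eta_{\alpha\beta}$, $(\alpha,\beta)\in R^2$, summing to $n$.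 For $\sigma\in S_n$, $u^\sigma=(u_{\sigma(1)},\dots,u_{\sigma(n)})$ and $C^\sigma=\{u^\sigma:u\in C\}$. *)

theory Defs
  imports "HOL-Combinatorics.Permutations" Complex_Main
begin

text \<open>The alphabet R is a finite commutative ring type which is either a field
 (F_q) or the ring Z_k, k = CARD('a) >= 2 (a finite ring generated additively by 1).
 Vectors of length n are lists of length n; coordinates are indexed 0..n-1.\<close>

definition is_field_or_Zk :: "'a::{finite,comm_ring_1} itself \<Rightarrow> bool" where
  "is_field_or_Zk _ \<longleftrightarrow>
     ((0::'a) \<noteq> 1 \<and> (\<forall>x::'a. x \<noteq> 0 \<longrightarrow> (\<exists>y. x * y = 1)))
   \<or> (card (UNIV::'a set) \<ge> 2 \<and> (\<forall>x::'a. \<exists>m::nat. x = of_nat m))"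

text \<open>R-linear code of length n: an R-submodule of R^n (for a field: a subspace;
 for Z_k: an additive subgroup, which is automatically closed under scalars).\<close>
definition R_linear_code :: "nat \<Rightarrow> 'a::{finite,comm_ring_1} list set \<Rightarrow> bool" where
  "R_linear_code n C \<longleftrightarrow>
     (\<forall>u\<in>C. length u = n) \<and> replicate n 0 \<in> C \<and>
     (\<forall>u\<in>C. \<forall>v\<in>C. map2 (+) u v \<in> C) \<and>
     (\<forall>a. \<forall>u\<in>C. map ((*) a) u \<in> C)"

definition comp :: "'a list \<Rightarrow> 'a \<Rightarrow> nat" where
  "comp u a = card {i. i < length u \<and> u ! i = a}"

definition A_num :: "'a list set \<Rightarrow> ('a \<Rightarrow> nat) \<Rightarrow> nat" where
  "A_num C s = card {u \<in> C. comp u = s}"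

definition eta :: "'a list \<Rightarrow> 'a list \<Rightarrow> 'a \<times> 'a \<Rightarrow> nat" where
  "eta u v = (\<lambda>(a, b). card {i. i < length u \<and> u ! i = a \<and> v ! i = b})"

definition bicomposition :: "nat \<Rightarrow> ('a::finite \<times> 'a \<Rightarrow> nat) \<Rightarrow> bool" where
  "bicomposition n e \<longleftrightarrow> (\<Sum>p\<in>UNIV. e p) = n"

definition perm_vec :: "(nat \<Rightarrow> nat) \<Rightarrow> 'a list \<Rightarrow> 'a list" where
  "perm_vec \<sigma> u = map (\<lambda>i. u ! \<sigma> i) [0..<length u]"

definition perm_code :: "(nat \<Rightarrow> nat) \<Rightarrow> 'a list set \<Rightarrow> 'a list set" where
  "perm_code \<sigma> C = perm_vec \<sigma> ` C"

definition B_num :: "'a list set \<Rightarrow> 'a list set \<Rightarrow> ('a \<Rightarrow> nat) \<Rightarrow> ('a \<Rightarrow> nat)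
     \<Rightarrow> ('a \<times> 'a \<Rightarrow> nat) \<Rightarrow> nat" where
  "B_num C D r s e = card {(u, v). u \<in> C \<and> v \<in> D \<and> comp u = r \<and> comp v = s \<and> eta u v = e}"

end

theory Submission
  imports Defs
begin

text \<open>Fix \<open>u \<in> C\<close> and \<open>v \<in> D\<close> with compositions \<open>r\<close> and \<open>s\<close>. The number of
  \<open>\<sigma> \<in> S\<^sub>n\<close> with \<open>\<eta>(u\<^sup>\<sigma>, v) = \<eta>\<close> does not depend on \<open>u\<close> and \<open>v\<close>: it is
  \<open>\<Prod>\<^sub>a r\<^sub>a! \<Prod>\<^sub>b s\<^sub>b! / \<Prod>\<^sub>a\<^sub>b \<eta>\<^sub>a\<^sub>b!\<close>, so swapping the sum over \<open>\<sigma>\<close> with the sum over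
  pairs \<open>(u, v)\<close> gives the theorem. The count is proved by induction on \<open>n\<close>: writing
  \<open>\<sigma> = (n b) \<circ> q\<close> with \<open>q\<close> fixing \<open>n\<close>, the last coordinate pairs \<open>u\<^sub>b\<close> with \<open>v\<^sub>n\<close>, and
  the remaining coordinates realise \<open>\<eta>\<close> with the entry \<open>(u\<^sub>b, v\<^sub>n)\<close> lowered by one.
  Lowering an entry multiplies the closed formula by \<open>row \<cdot> column / entry\<close>, and the
  resulting weights \<open>\<eta>(u\<^sub>b, v\<^sub>n) / (r(u\<^sub>b) s(v\<^sub>n))\<close> sum to \<open>1\<close> over \<open>b\<close>.\<close>

definition row_sum :: "('a \<times> 'b::finite \<Rightarrow> nat) \<Rightarrow> 'a \<Rightarrow> nat" where
  "row_sum e a = (\<Sum>b\<in>UNIV. e (a, b))"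

definition col_sum :: "('a::finite \<times> 'b \<Rightarrow> nat) \<Rightarrow> 'b \<Rightarrow> nat" where
  "col_sum e b = (\<Sum>a\<in>UNIV. e (a, b))"

definition bicomp_perms :: "('a::finite \<times> 'b::finite \<Rightarrow> nat) \<Rightarrow> real" where
  "bicomp_perms e = (\<Prod>a\<in>UNIV. fact (row_sum e a)) * (\<Prod>b\<in>UNIV. fact (col_sum e b))
                    / (\<Prod>p\<in>UNIV. fact (e p))"

definition value_count :: "nat \<Rightarrow> (nat \<Rightarrow> 'a) \<Rightarrow> 'a \<Rightarrow> nat" where
  "value_count n x a = card {i. i < n \<and> x i = a}"

definition pair_count :: "nat \<Rightarrow> (nat \<Rightarrow> 'a) \<Rightarrow> (nat \<Rightarrow> 'b) \<Rightarrow> 'a \<times> 'b \<Rightarrow> nat" where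
  "pair_count n x v = (\<lambda>(a, b). card {i. i < n \<and> x i = a \<and> v i = b})"

lemma bicomp_perms_eq:
  "bicomp_perms e = (\<Prod>a\<in>UNIV. fact (row_sum e a))
     * (\<Prod>b\<in>UNIV. fact (col_sum e b) / (\<Prod>a\<in>UNIV. fact (e (a, b))))"
proof -
  have "(\<Prod>p\<in>UNIV. fact (e p) :: real) = (\<Prod>b\<in>UNIV. \<Prod>a\<in>UNIV. fact (e (a, b)))"
    by (subst prod.swap) (simp add: prod.cartesian_product' flip: UNIV_Times_UNIV)
  then show ?thesis
    by (simp add: bicomp_perms_def prod_dividef)
qed

lemma sum_fun_upd_decrement:
  fixes f :: "'a::finite \<Rightarrow> nat"
  assumes "1 \<le> f c"
  shows "(\<Sum>a\<in>UNIV. (f(c := f c - 1)) a) = (\<Sum>a\<in>UNIV. f a) - 1"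
proof -
  have "(\<Sum>a\<in>UNIV. f a) = f c + (\<Sum>a\<in>UNIV - {c}. f a)"
    by (rule sum.remove) auto
  moreover have "(\<Sum>a\<in>UNIV. (f(c := f c - 1)) a) = (f c - 1) + (\<Sum>a\<in>UNIV - {c}. f a)"
    by (subst sum.remove[of _ c]) (auto intro!: sum.cong)
  ultimately show ?thesis
    using assms by simp
qed

lemma prod_fact_fun_upd_decrement:
  fixes f :: "'a::finite \<Rightarrow> nat"
  assumes "1 \<le> f c"
  shows "(\<Prod>a\<in>UNIV. fact (f a) :: real) = real (f c) * (\<Prod>a\<in>UNIV. fact ((f(c := f c - 1)) a))"
proof -
  have "(\<Prod>a\<in>UNIV. fact (f a) :: real) = fact (f c) * (\<Prod>a\<in>UNIV - {c}. fact (f a))"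
    by (rule prod.remove) auto
  moreover have "(\<Prod>a\<in>UNIV. fact ((f(c := f c - 1)) a) :: real)
                 = fact (f c - 1) * (\<Prod>a\<in>UNIV - {c}. fact (f a))"
    by (subst prod.remove[of _ c]) (auto intro!: prod.cong)
  moreover have "fact (f c) = (real (f c) * fact (f c - 1) :: real)"
    using assms by (simp add: fact_reduce)
  ultimately show ?thesis
    by simp
qed

lemma entry_le_row_sum: "e (a, b) \<le> row_sum e a"
  unfolding row_sum_def by (rule member_le_sum) auto

lemma entry_le_col_sum: "e (a, b) \<le> col_sum e b"
  unfolding col_sum_def by (rule member_le_sum) auto

lemma row_sum_decrement:
  assumes "1 \<le> e (a, b)"
  shows "row_sum (e((a, b) := e (a, b) - 1)) = (row_sum e)(a := row_sum e a - 1)"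
proof
  fix a'
  show "row_sum (e((a, b) := e (a, b) - 1)) a' = ((row_sum e)(a := row_sum e a - 1)) a'"
  proof (cases "a' = a")
    case True
    have "row_sum (e((a, b) := e (a, b) - 1)) a = (\<Sum>b'\<in>UNIV. ((\<lambda>b'. e (a, b'))(b := e (a, b) - 1)) b')"
      unfolding row_sum_def by (intro sum.cong) auto
    with True show ?thesis
      using sum_fun_upd_decrement[of "\<lambda>b'. e (a, b')" b] assms by (simp add: row_sum_def)
  qed (simp add: row_sum_def)
qed

lemma col_sum_decrement:
  assumes "1 \<le> e (a, b)"
  shows "col_sum (e((a, b) := e (a, b) - 1)) = (col_sum e)(b := col_sum e b - 1)"
proof
  fix b'
  show "col_sum (e((a, b) := e (a, b) - 1)) b' = ((col_sum e)(b := col_sum e b - 1)) b'"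
  proof (cases "b' = b")
    case True
    have "col_sum (e((a, b) := e (a, b) - 1)) b = (\<Sum>a'\<in>UNIV. ((\<lambda>a'. e (a', b))(a := e (a, b) - 1)) a')"
      unfolding col_sum_def by (intro sum.cong) auto
    with True show ?thesis
      using sum_fun_upd_decrement[of "\<lambda>a'. e (a', b)" a] assms by (simp add: col_sum_def)
  qed (simp add: col_sum_def)
qed

lemma bicomp_perms_decrement:
  assumes "1 \<le> e (a, b)"
  shows "bicomp_perms e * real (e (a, b))
       = bicomp_perms (e((a, b) := e (a, b) - 1)) * real (row_sum e a) * real (col_sum e b)"
proof -
  let ?e' = "e((a, b) := e (a, b) - 1)"
  have "1 \<le> row_sum e a" "1 \<le> col_sum e b"
    using assms entry_le_row_sum[of e a b] entry_le_col_sum[of e a b] by linarith+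
  then have rows: "(\<Prod>a\<in>UNIV. fact (row_sum e a) :: real) = real (row_sum e a) * (\<Prod>a\<in>UNIV. fact (row_sum ?e' a))"
    and cols: "(\<Prod>b\<in>UNIV. fact (col_sum e b) :: real) = real (col_sum e b) * (\<Prod>b\<in>UNIV. fact (col_sum ?e' b))"
    unfolding row_sum_decrement[of e, OF assms] col_sum_decrement[of e, OF assms]
    by (simp_all add: prod_fact_fun_upd_decrement)
  have entries: "(\<Prod>p\<in>UNIV. fact (e p) :: real) = real (e (a, b)) * (\<Prod>p\<in>UNIV. fact (?e' p))"
    using prod_fact_fun_upd_decrement[of e "(a, b)"] assms by simp
  have "(\<Prod>p\<in>UNIV. fact (?e' p) :: real) \<noteq> 0"
    by simp
  then show ?thesis
    using assms unfolding bicomp_perms_def rows cols entries by (simp add: field_simps)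
qed

lemma card_less_Suc_conj:
  "card {i. i < Suc n \<and> P i} = card {i. i < n \<and> P i} + of_bool (P n)"
proof -
  have "{i. i < Suc n \<and> P i} = {i. i < n \<and> P i} \<union> (if P n then {n} else {})"
    by (auto simp: less_Suc_eq)
  then show ?thesis
    by (auto simp: card_insert_if)
qed

lemma value_count_Suc:
  "value_count (Suc n) x = (value_count n x)(x n := value_count n x (x n) + 1)"
  by (auto simp: value_count_def card_less_Suc_conj)

lemma value_count_prefix:
  "value_count n x = (value_count (Suc n) x)(x n := value_count (Suc n) x (x n) - 1)"
  by (auto simp: value_count_Suc)

lemma pair_count_Suc:
  "pair_count (Suc n) x v = (pair_count n x v)((x n, v n) := pair_count n x v (x n, v n) + 1)"
  by (auto simp: pair_count_def card_less_Suc_conj)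

lemma value_count_comp_permutes:
  assumes "\<sigma> permutes {0..<n}"
  shows "value_count n (x \<circ> \<sigma>) = value_count n x"
proof
  fix a
  have "card {i. i < n \<and> (x \<circ> \<sigma>) i = a} = card (\<sigma> -` {i. i < n \<and> x i = a})"
    using permutes_in_image[OF assms] by (auto intro!: arg_cong[where f = card])
  also have "\<dots> = card {i. i < n \<and> x i = a}"
    using permutes_inj[OF assms] permutes_surj[OF assms] by (intro card_vimage_inj) auto
  finally show "value_count n (x \<circ> \<sigma>) a = value_count n x a"
    unfolding value_count_def .
qed

lemma fun_upd_increment_eq_iff:
  fixes c e :: "'a \<Rightarrow> nat"
  shows "c(p := c p + 1) = e \<longleftrightarrow> 1 \<le> e p \<and> c = e(p := e p - 1)"
  by (auto simp: fun_eq_iff)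

lemma sum_by_value_count:
  fixes x :: "nat \<Rightarrow> 'a::finite" and g :: "'a \<Rightarrow> 'b::comm_semiring_1"
  shows "(\<Sum>i\<in>{0..<n}. g (x i)) = (\<Sum>a\<in>UNIV. of_nat (value_count n x a) * g a)"
proof -
  have "(\<Sum>i\<in>{0..<n}. g (x i)) = (\<Sum>a\<in>UNIV. \<Sum>i\<in>{i \<in> {0..<n}. x i = a}. g (x i))"
    by (rule sum.group[symmetric]) auto
  also have "\<dots> = (\<Sum>a\<in>UNIV. of_nat (value_count n x a) * g a)"
    unfolding value_count_def by (intro sum.cong) (auto intro!: arg_cong[where f = card])
  finally show ?thesis .
qed

lemma pair_count_Suc_comp_permutes_eq_iff:
  assumes "q permutes {0..<n}"
  shows "pair_count (Suc n) (x \<circ> q) v = e \<longleftrightarrow>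
         1 \<le> e (x n, v n) \<and> pair_count n (x \<circ> q) v = e((x n, v n) := e (x n, v n) - 1)"
proof -
  have "q n = n"
    using assms by (simp add: permutes_not_in)
  then show ?thesis
    unfolding pair_count_Suc fun_upd_increment_eq_iff by simp
qed

lemma sum_entry_over_row_and_col_sum:
  fixes x :: "nat \<Rightarrow> 'a::finite" and e :: "'a \<times> 'b::finite \<Rightarrow> nat"
  assumes rows: "row_sum e = value_count m x" and col: "0 < col_sum e c"
  shows "(\<Sum>i\<in>{0..<m}. real (e (x i, c)) / (real (row_sum e (x i)) * real (col_sum e c))) = 1"
proof -
  have "(\<Sum>i\<in>{0..<m}. real (e (x i, c)) / (real (row_sum e (x i)) * real (col_sum e c)))
      = (\<Sum>a\<in>UNIV. real (row_sum e a) * (real (e (a, c)) / (real (row_sum e a) * real (col_sum e c))))"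
    using sum_by_value_count[where x = x and n = m and g = "\<lambda>a. real (e (a, c)) / (real (row_sum e a) * real (col_sum e c))"]
    unfolding rows by simp
  also have "\<dots> = (\<Sum>a\<in>UNIV. real (e (a, c)) / real (col_sum e c))"
  proof (intro sum.cong refl)
    fix a
    show "real (row_sum e a) * (real (e (a, c)) / (real (row_sum e a) * real (col_sum e c)))
        = real (e (a, c)) / real (col_sum e c)"
      using entry_le_row_sum[of e a c] by (cases "row_sum e a = 0") auto
  qed
  also have "\<dots> = real (col_sum e c) / real (col_sum e c)"
    by (simp only: col_sum_def of_nat_sum sum_divide_distrib)
  also have "\<dots> = 1"
    using col by simp
  finally show ?thesis .
qed

text \<open>The permutations \<open>transpose n b \<circ> q\<close> are exactly those of \<open>{0..<Suc n}\<close> mapping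
  \<open>n\<close> to \<open>b\<close>; the hypothesis is the count for words of length \<open>n\<close>.\<close>

lemma card_permutes_transpose_pair_count:
  fixes x :: "nat \<Rightarrow> 'a::finite" and v :: "nat \<Rightarrow> 'b::finite"
  assumes count_prefix: "\<And>(y :: nat \<Rightarrow> 'a) e'. row_sum e' = value_count n y \<Longrightarrow> col_sum e' = value_count n v \<Longrightarrow>
            real (card {q. q permutes {0..<n} \<and> pair_count n (y \<circ> q) v = e'}) = bicomp_perms e'"
    and rows: "row_sum e = value_count (Suc n) x" and cols: "col_sum e = value_count (Suc n) v"
    and b: "b < Suc n"
  shows "real (card {q. q permutes {0..<n} \<and> pair_count (Suc n) (x \<circ> (transpose n b \<circ> q)) v = e})
       = bicomp_perms e * (real (e (x b, v n)) / (real (row_sum e (x b)) * real (col_sum e (v n))))"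
proof -
  define y where "y = x \<circ> transpose n b"
  define e' where "e' = e((x b, v n) := e (x b, v n) - 1)"
  have "y n = x b"
    by (simp add: y_def)
  then have match_iff: "pair_count (Suc n) (x \<circ> (transpose n b \<circ> q)) v = e
      \<longleftrightarrow> 1 \<le> e (x b, v n) \<and> pair_count n (y \<circ> q) v = e'" if "q permutes {0..<n}" for q
    using pair_count_Suc_comp_permutes_eq_iff[OF that, of y v e] by (simp add: y_def e'_def o_assoc)
  show ?thesis
  proof (cases "1 \<le> e (x b, v n)")
    case False
    then have no_match: "{q. q permutes {0..<n} \<and> pair_count (Suc n) (x \<circ> (transpose n b \<circ> q)) v = e} = {}"
      using match_iff by blast
    show ?thesis
      unfolding no_match using False by simp
  next
    case True
    have "value_count (Suc n) y = value_count (Suc n) x"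
      unfolding y_def using b by (intro value_count_comp_permutes permutes_swap_id) auto
    then have "row_sum e' = value_count n y"
      unfolding e'_def row_sum_decrement[of e, OF True] value_count_prefix[of n y] \<open>y n = x b\<close>
      by (simp add: rows)
    moreover have "col_sum e' = value_count n v"
      unfolding e'_def col_sum_decrement[of e, OF True] value_count_prefix[of n v]
      by (simp add: cols)
    ultimately have "real (card {q. q permutes {0..<n} \<and> pair_count n (y \<circ> q) v = e'}) = bicomp_perms e'"
      by (rule count_prefix)
    moreover have "bicomp_perms e * real (e (x b, v n))
                 = bicomp_perms e' * real (row_sum e (x b)) * real (col_sum e (v n))"
      unfolding e'_def by (rule bicomp_perms_decrement[of e, OF True])
    moreover have "0 < row_sum e (x b)" "0 < col_sum e (v n)"
      using True entry_le_row_sum[of e "x b" "v n"] entry_le_col_sum[of e "x b" "v n"] by linarith+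
    moreover have "{q. q permutes {0..<n} \<and> pair_count (Suc n) (x \<circ> (transpose n b \<circ> q)) v = e}
                 = {q. q permutes {0..<n} \<and> pair_count n (y \<circ> q) v = e'}"
      using True match_iff by blast
    ultimately show ?thesis
      by (simp add: field_simps)
  qed
qed

lemma card_permutes_pair_count:
  fixes x :: "nat \<Rightarrow> 'a::finite" and v :: "nat \<Rightarrow> 'b::finite"
  assumes "row_sum e = value_count n x" and "col_sum e = value_count n v"
  shows "real (card {\<sigma>. \<sigma> permutes {0..<n} \<and> pair_count n (x \<circ> \<sigma>) v = e}) = bicomp_perms e"
  using assms
proof (induction n arbitrary: x e)
  case 0
  then have "e = (\<lambda>_. 0)"
    by (auto simp: fun_eq_iff row_sum_def value_count_def)
  moreover have "{\<sigma>. \<sigma> permutes {0..<0::nat}} = {id}"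
    by auto
  ultimately show ?case
    by (simp add: bicomp_perms_def row_sum_def col_sum_def pair_count_def)
next
  case (Suc n)
  let ?match = "\<lambda>\<sigma>. pair_count (Suc n) (x \<circ> \<sigma>) v = e"
  have col_pos: "0 < col_sum e (v n)"
    using Suc.prems(2) by (simp add: value_count_Suc)
  have "real (card {\<sigma>. \<sigma> permutes {0..<Suc n} \<and> ?match \<sigma>})
      = (\<Sum>\<sigma> | \<sigma> permutes insert n {0..<n}. of_bool (?match \<sigma>))"
    by (simp add: finite_permutations Collect_conj_eq atLeast0_lessThan_Suc)
  also have "\<dots> = (\<Sum>b\<in>{0..<Suc n}. real (card {q. q permutes {0..<n} \<and> ?match (transpose n b \<circ> q)}))"
    by (subst sum_over_permutations_insert) (auto simp: atLeast0_lessThan_Suc finite_permutations Collect_conj_eq)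
  also have "\<dots> = bicomp_perms e
      * (\<Sum>b\<in>{0..<Suc n}. real (e (x b, v n)) / (real (row_sum e (x b)) * real (col_sum e (v n))))"
    unfolding sum_distrib_left
    by (intro sum.cong refl card_permutes_transpose_pair_count[OF Suc.IH Suc.prems]) auto
  also have "\<dots> = bicomp_perms e"
    using sum_entry_over_row_and_col_sum[OF Suc.prems(1) col_pos] by simp
  finally show ?case .
qed

lemma perm_vec_length [simp]: "length (perm_vec \<sigma> u) = length u"
  by (simp add: perm_vec_def)

lemma perm_vec_nth [simp]: "i < length u \<Longrightarrow> perm_vec \<sigma> u ! i = u ! \<sigma> i"
  by (simp add: perm_vec_def)

lemma perm_vec_inv:
  assumes "\<sigma> permutes {0..<length u}"
  shows "perm_vec (inv \<sigma>) (perm_vec \<sigma> u) = u"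
proof (rule nth_equalityI)
  fix i
  assume "i < length (perm_vec (inv \<sigma>) (perm_vec \<sigma> u))"
  then have "i < length u" "inv \<sigma> i < length u"
    using permutes_in_image[OF permutes_inv[OF assms]] by auto
  then show "perm_vec (inv \<sigma>) (perm_vec \<sigma> u) ! i = u ! i"
    using permutes_inverses(1)[OF assms] by simp
qed simp

lemma inj_on_perm_vec:
  assumes "\<sigma> permutes {0..<n}"
  shows "inj_on (perm_vec \<sigma>) {u. length u = n}"
  using perm_vec_inv assms by (intro inj_on_inverseI[where g = "perm_vec (inv \<sigma>)"]) auto

lemma comp_eq_value_count: "comp u = value_count (length u) ((!) u)"
  by (simp add: comp_def value_count_def fun_eq_iff)

lemma comp_perm_vec:
  assumes "\<sigma> permutes {0..<length u}"
  shows "comp (perm_vec \<sigma> u) = comp u"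
proof -
  have "comp (perm_vec \<sigma> u) = value_count (length u) ((!) u \<circ> \<sigma>)"
    by (auto simp: comp_def value_count_def fun_eq_iff intro!: arg_cong[where f = card])
  then show ?thesis
    by (simp add: value_count_comp_permutes[OF assms] comp_eq_value_count)
qed

lemma eta_perm_vec: "eta (perm_vec \<sigma> u) v = pair_count (length u) ((!) u \<circ> \<sigma>) ((!) v)"
  by (auto simp: eta_def pair_count_def fun_eq_iff intro!: arg_cong[where f = card])

lemma B_num_perm_code:
  assumes \<sigma>: "\<sigma> permutes {0..<n}" and lengths: "\<forall>u\<in>C. length u = n"
  shows "B_num (perm_code \<sigma> C) D r s e
       = card {(u, v) \<in> {u \<in> C. comp u = r} \<times> {v \<in> D. comp v = s}. eta (perm_vec \<sigma> u) v = e}"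
proof -
  let ?M = "{(u, v) \<in> {u \<in> C. comp u = r} \<times> {v \<in> D. comp v = s}. eta (perm_vec \<sigma> u) v = e}"
  have "{(w, v). w \<in> perm_code \<sigma> C \<and> v \<in> D \<and> comp w = r \<and> comp v = s \<and> eta w v = e}
      = (\<lambda>(u, v). (perm_vec \<sigma> u, v)) ` ?M"
    using lengths comp_perm_vec[of \<sigma>] \<sigma> unfolding perm_code_def by force
  moreover have "inj_on (\<lambda>(u, v). (perm_vec \<sigma> u, v)) ?M"
    using inj_on_perm_vec[OF \<sigma>] lengths by (auto simp: inj_on_def)
  ultimately show ?thesis
    unfolding B_num_def by (simp add: card_image)
qed

lemma sum_B_num_perm_code:
  fixes C D :: "'a::finite list set"
  assumes lengths_C: "\<forall>u\<in>C. length u = n" and lengths_D: "\<forall>v\<in>D. length v = n"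
    and rows: "row_sum e = r" and cols: "col_sum e = s"
  shows "real (\<Sum>\<sigma> | \<sigma> permutes {0..<n}. B_num (perm_code \<sigma> C) D r s e)
       = real (A_num C r) * real (A_num D s) * bicomp_perms e"
proof -
  define Cr where "Cr = {u \<in> C. comp u = r}"
  define Ds where "Ds = {v \<in> D. comp v = s}"
  let ?G = "{\<sigma>. \<sigma> permutes {0..<n}}"
  let ?match = "\<lambda>\<sigma> (u, v). eta (perm_vec \<sigma> u) v = e"
  have "finite {u :: 'a list. length u = n}"
    using finite_lists_length_eq[of "UNIV :: 'a set" n] by simp
  then have "finite Cr" "finite Ds"
    using lengths_C lengths_D unfolding Cr_def Ds_def by (auto elim!: rev_finite_subset)
  have matches: "(\<Sum>\<sigma>\<in>?G. of_bool (?match \<sigma> p)) = bicomp_perms e" if mem: "p \<in> Cr \<times> Ds" for p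
  proof -
    obtain u v where p: "p = (u, v)" "u \<in> C" "comp u = r" "v \<in> D" "comp v = s"
      using mem unfolding Cr_def Ds_def by auto
    have "row_sum e = value_count n ((!) u)" "col_sum e = value_count n ((!) v)"
      using p lengths_C lengths_D rows cols by (auto simp: comp_eq_value_count)
    then have "real (card {\<sigma>. \<sigma> permutes {0..<n} \<and> pair_count n ((!) u \<circ> \<sigma>) ((!) v) = e}) = bicomp_perms e"
      by (rule card_permutes_pair_count)
    then show ?thesis
      using p lengths_C by (simp add: eta_perm_vec finite_permutations Collect_conj_eq)
  qed
  have "real (\<Sum>\<sigma>\<in>?G. B_num (perm_code \<sigma> C) D r s e) = (\<Sum>\<sigma>\<in>?G. \<Sum>p\<in>Cr \<times> Ds. of_bool (?match \<sigma> p))"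
    using \<open>finite Cr\<close> \<open>finite Ds\<close> lengths_C
    by (auto simp: B_num_perm_code Cr_def Ds_def Int_def case_prod_beta intro!: sum.cong arg_cong[where f = card])
  also have "\<dots> = (\<Sum>p\<in>Cr \<times> Ds. \<Sum>\<sigma>\<in>?G. of_bool (?match \<sigma> p))"
    by (rule sum.swap)
  also have "\<dots> = real (card Cr) * real (card Ds) * bicomp_perms e"
    by (simp add: matches card_cartesian_product)
  finally show ?thesis
    unfolding A_num_def Cr_def Ds_def .
qed

theorem mainTheorem4:
  fixes C D :: "'a::{finite,comm_ring_1} list set" and n :: nat
    and e :: "'a \<times> 'a \<Rightarrow> nat" and r s :: "'a \<Rightarrow> nat"
  assumes "is_field_or_Zk TYPE('a)"
    and "R_linear_code n C" and "R_linear_code n D"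
    and "bicomposition n e"
    and "\<And>a. r a = (\<Sum>b\<in>UNIV. e (a, b))"
    and "\<And>b. s b = (\<Sum>a\<in>UNIV. e (a, b))"
  shows "real (\<Sum>\<sigma>\<in>{\<sigma>. \<sigma> permutes {0..<n}}. B_num (perm_code \<sigma> C) D r s e)
       = real (A_num C r) * real (A_num D s) * (\<Prod>a\<in>UNIV. fact (r a))
         * (\<Prod>b\<in>UNIV. fact (s b) / (\<Prod>a\<in>UNIV. fact (e (a, b))))"
proof -
  have "row_sum e = r" "col_sum e = s"
    using assms(5,6) by (auto simp: row_sum_def col_sum_def)
  moreover have "\<forall>u\<in>C. length u = n" "\<forall>v\<in>D. length v = n"
    using assms(2,3) by (simp_all add: R_linear_code_def)
  ultimately show ?thesis
    using sum_B_num_perm_code[of C n D e r s] by (simp add: bicomp_perms_eq)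
qed

end
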